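(* Let $H$ be a finite nilpotent group, with Sylow $p$-subgroups $H_p$ for $p$ in the set $\pi$ of primes dividing $|H|$, so $H=\prod_{p\in\pi}H_p$. Suppose each $H_p$ is metacyclic with a metacyclic factorization $H_p=B_pA_p$ ($A_p$, $B_p$ cyclic, $A_p\trianglelefteq H_p$) such that the family $\mathcal{F}_{H_p}$ consisting of $A_p$, $B_p$ and the conjugates of $B_p$ in $H_p$ is regular and independent in $H_p$ and $H_p$ is its active sum. Let $\mathcal{F}_H=\bigcup_{p\in\pi}\mathcal{F}_{H_p}$. Then $H$ is the active sum of $\mathcal{F}_H$.
   Context: For a group $G$ and a family $\mathcal{F}$ of distinct subgroups that generates $G$ and is closed under conjugation, the active sum $S$ of $\mathcal{F}$ is the free product of the members of $\mathcal{F}$ divided by the normal subgroup generated by all elements $h^{-1}\cdot g\cdot h\cdot (g^h)^{-1}$ with $h\in F_1$, $g\in F_2$, $F_1,F_2\in\mathcal{F}$, where $g^h=h^{-1}gh$ is regarded as an element of the factor $h^{-1}F_2h\in\mathcal{F}$; the inclusions induce a canonical surjection $\varphi:S\to G$ and "$G$ is the active sum of $\mathcal{F}$" means $\varphi$ is an isomorphism. A (discrete) family is regular iff $[F,N_G(F)]=F\cap G'$ for all $F\in\mathcal{F}$; it is independent iff for a set $\mathcal{T}$ of representatives of conjugacy classes of its members the canonical map $\bigoplus_{F\in\mathcal{T}}F/(F\cap G')\to G/G'$ is an isomorphism. (Such factorizations of each $H_p$ exist by the paper's result on metacyclic $p$-groups.) *)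

theory Defs
  imports "HOL-Algebra.Algebra"
begin

definition conj_set :: "('a, 'b) monoid_scheme \<Rightarrow> 'a \<Rightarrow> 'a set \<Rightarrow> 'a set" where
  "conj_set G h F = (\<lambda>x. inv\<^bsub>G\<^esub> h \<otimes>\<^bsub>G\<^esub> x \<otimes>\<^bsub>G\<^esub> h) ` F"

definition normalizer_of :: "('a, 'b) monoid_scheme \<Rightarrow> 'a set \<Rightarrow> 'a set" where
  "normalizer_of G F = {h \<in> carrier G. conj_set G h F = F}"

definition comm_subgroup :: "('a, 'b) monoid_scheme \<Rightarrow> 'a set \<Rightarrow> 'a set \<Rightarrow> 'a set" where
  "comm_subgroup G U V = generate G
     (\<Union>x\<in>U. \<Union>y\<in>V. {x \<otimes>\<^bsub>G\<^esub> y \<otimes>\<^bsub>G\<^esub> inv\<^bsub>G\<^esub> x \<otimes>\<^bsub>G\<^esub> inv\<^bsub>G\<^esub> y})"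

fun lower_central :: "('a, 'b) monoid_scheme \<Rightarrow> nat \<Rightarrow> 'a set" where
  "lower_central G 0 = carrier G"
| "lower_central G (Suc n) = comm_subgroup G (lower_central G n) (carrier G)"

definition nilpotent_group :: "('a, 'b) monoid_scheme \<Rightarrow> bool" where
  "nilpotent_group G \<longleftrightarrow> group G \<and> (\<exists>n. lower_central G n = {\<one>\<^bsub>G\<^esub>})"

definition conj_closed_gen_family :: "('a, 'b) monoid_scheme \<Rightarrow> 'a set set \<Rightarrow> bool" where
  "conj_closed_gen_family G \<F> \<longleftrightarrow>
     (\<forall>F\<in>\<F>. subgroup F G) \<and>
     (\<forall>F\<in>\<F>. \<forall>h\<in>carrier G. conj_set G h F \<in> \<F>) \<and>
     generate G (\<Union>\<F>) = carrier G"

(* Active sum, as the monoid presentation of the free product of the members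
   (generators: pairs (F,g) with g in F; relations: multiplication tables and units
   of the factors) modulo the relations  h^{-1} g h = g^h  (g^h in the factor h^{-1} F2 h).
   actsum_rel is the congruence generated by these relations on words. *)
inductive actsum_rel :: "('a, 'b) monoid_scheme \<Rightarrow> 'a set set
     \<Rightarrow> ('a set \<times> 'a) list \<Rightarrow> ('a set \<times> 'a) list \<Rightarrow> bool"
  for G \<F> where
  refl: "actsum_rel G \<F> w w"
| sym: "actsum_rel G \<F> w w' \<Longrightarrow> actsum_rel G \<F> w' w"
| trans: "actsum_rel G \<F> w w' \<Longrightarrow> actsum_rel G \<F> w' w'' \<Longrightarrow> actsum_rel G \<F> w w''"
| mult: "F \<in> \<F> \<Longrightarrow> a \<in> F \<Longrightarrow> b \<in> F \<Longrightarrow>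
     actsum_rel G \<F> (u @ [(F, a), (F, b)] @ v) (u @ [(F, a \<otimes>\<^bsub>G\<^esub> b)] @ v)"
| unit: "F \<in> \<F> \<Longrightarrow> actsum_rel G \<F> (u @ [(F, \<one>\<^bsub>G\<^esub>)] @ v) (u @ v)"
| conj: "F1 \<in> \<F> \<Longrightarrow> F2 \<in> \<F> \<Longrightarrow> h \<in> F1 \<Longrightarrow> g \<in> F2 \<Longrightarrow>
     actsum_rel G \<F> (u @ [(F1, inv\<^bsub>G\<^esub> h), (F2, g), (F1, h)] @ v)
                     (u @ [(conj_set G h F2, inv\<^bsub>G\<^esub> h \<otimes>\<^bsub>G\<^esub> g \<otimes>\<^bsub>G\<^esub> h)] @ v)"

definition actsum_word :: "'a set set \<Rightarrow> ('a set \<times> 'a) list \<Rightarrow> bool" where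
  "actsum_word \<F> w \<longleftrightarrow> (\<forall>(F, g) \<in> set w. F \<in> \<F> \<and> g \<in> F)"

definition actsum_eval :: "('a, 'b) monoid_scheme \<Rightarrow> ('a set \<times> 'a) list \<Rightarrow> 'a" where
  "actsum_eval G w = foldr (\<lambda>(F, g) acc. g \<otimes>\<^bsub>G\<^esub> acc) w \<one>\<^bsub>G\<^esub>"

(* G is the active sum of F: phi is an isomorphism.  phi is surjective since F
   generates G; injectivity means words with equal image are equal in S. *)
definition is_active_sum :: "('a, 'b) monoid_scheme \<Rightarrow> 'a set set \<Rightarrow> bool" where
  "is_active_sum G \<F> \<longleftrightarrow> conj_closed_gen_family G \<F> \<and>
     (\<forall>w w'. actsum_word \<F> w \<and> actsum_word \<F> w' \<and> actsum_eval G w = actsum_eval G w'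
        \<longrightarrow> actsum_rel G \<F> w w')"

definition regular_family :: "('a, 'b) monoid_scheme \<Rightarrow> 'a set set \<Rightarrow> bool" where
  "regular_family G \<F> \<longleftrightarrow>
     (\<forall>F\<in>\<F>. comm_subgroup G F (normalizer_of G F) = F \<inter> derived G (carrier G))"

definition conj_reps :: "('a, 'b) monoid_scheme \<Rightarrow> 'a set set \<Rightarrow> 'a set set \<Rightarrow> bool" where
  "conj_reps G \<F> T \<longleftrightarrow> T \<subseteq> \<F> \<and>
     (\<forall>F\<in>\<F>. \<exists>!F'\<in>T. \<exists>h\<in>carrier G. F = conj_set G h F')"

(* canonical map  (+)_{F in T} F/(F \<inter> G') -> G/G' *)
definition indep_map :: "('a, 'b) monoid_scheme \<Rightarrow> 'a set set \<Rightarrow> ('a set \<Rightarrow> 'a set) \<Rightarrow> 'a set" where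
  "indep_map G T x = finprod (G Mod derived G (carrier G))
      (\<lambda>F. derived G (carrier G) <#>\<^bsub>G\<^esub> x F)
      {F \<in> T. x F \<noteq> \<one>\<^bsub>subgroup_generated G F Mod (F \<inter> derived G (carrier G))\<^esub>}"

definition independent_family :: "('a, 'b) monoid_scheme \<Rightarrow> 'a set set \<Rightarrow> bool" where
  "independent_family G \<F> \<longleftrightarrow> (\<exists>T. conj_reps G \<F> T \<and>
     indep_map G T \<in> iso (sum_group T (\<lambda>F. subgroup_generated G F Mod (F \<inter> derived G (carrier G))))
                          (G Mod derived G (carrier G)))"

end

theory Submission
  imports Defs
begin

text \<open>Elements of coprime order in a nilpotent group commute: their commutator lies arbitrarily
  deep in the lower central series. Hence the Sylow subgroups \<open>H\<^sub>p\<close> commute elementwise,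
  conjugation by \<open>H\<^sub>q\<close> (\<open>q \<noteq> p\<close>) fixes every member of the family of \<open>H\<^sub>p\<close>, and
  \<open>\<F>\<^sub>H\<close> is closed under conjugation. In the active sum, the conjugation relations let letters of different primes
  commute, so every word can be sorted into its \<open>p\<close>-part followed by the rest. If two words have
  the same image in \<open>H\<close>, their \<open>p\<close>-parts have the same image, since \<open>H\<^sub>p\<close> meets the subgroup
  generated by the other Sylow subgroups trivially (its exponent is coprime to theirs); now the
  active-sum property of \<open>H\<^sub>p\<close> and induction over the primes finish the proof.\<close>

section \<open>Commutators in nilpotent groups\<close>

declare lower_central.simps(2) [simp del]

context group begin

lemma inv_m_cancel_left [simp]: "g \<in> carrier G \<Longrightarrow> z \<in> carrier G \<Longrightarrow> inv g \<otimes> (g \<otimes> z) = z"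
  by (simp add: m_assoc[symmetric])

lemma m_inv_cancel_left [simp]: "g \<in> carrier G \<Longrightarrow> z \<in> carrier G \<Longrightarrow> g \<otimes> (inv g \<otimes> z) = z"
  by (simp add: m_assoc[symmetric])

lemma subgroup_nat_pow_closed: "subgroup H G \<Longrightarrow> h \<in> H \<Longrightarrow> h [^] (n::nat) \<in> H"
  by (metis subgroup_int_pow_closed int_pow_int)

abbreviation commutator :: "'a \<Rightarrow> 'a \<Rightarrow> 'a" where
  "commutator x y \<equiv> x \<otimes> y \<otimes> inv x \<otimes> inv y"

lemma commutator_swap: "x \<in> carrier G \<Longrightarrow> y \<in> carrier G \<Longrightarrow> commutator y x = inv (commutator x y)"
  by (simp add: inv_mult_group m_assoc)

lemma commute_if_commutator_eq_one:
  assumes x: "x \<in> carrier G" and y: "y \<in> carrier G" and c: "commutator x y = \<one>"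
  shows "x \<otimes> y = y \<otimes> x"
proof -
  have "x \<otimes> y = commutator x y \<otimes> (y \<otimes> x)" using x y by (simp add: m_assoc)
  then show ?thesis using c x y by simp
qed

lemma mem_subgroup_if_coprime_pows:
  assumes N: "subgroup N G" and c: "c \<in> carrier G" and m: "c [^] (m::nat) \<in> N" and n: "c [^] (n::nat) \<in> N"
    and cop: "coprime m n"
  shows "c \<in> N"
proof (cases "m = 0")
  case True
  then show ?thesis using cop n c by simp
next
  case False
  from bezout_nat[OF False, of n] cop obtain a b where ab: "m * a = n * b + 1" by auto
  have "c [^] (m * a) = c [^] (n * b) \<otimes> c" using c by (simp add: ab nat_pow_mult[symmetric])
  then have "c = inv (c [^] (n * b)) \<otimes> c [^] (m * a)" using c by (simp add: m_assoc[symmetric])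
  moreover have "c [^] (m * a) \<in> N" "c [^] (n * b) \<in> N"
    using m n c by (simp_all add: nat_pow_pow[symmetric] subgroup_nat_pow_closed[OF N])
  ultimately show ?thesis using N by (metis subgroup.m_closed subgroup.m_inv_closed)
qed

lemma lower_central_normal: "lower_central G k \<lhd> G"
proof (induction k)
  case 0 show ?case by (simp add: normal_invI subgroup_self)
next
  case (Suc k)
  interpret N: normal "lower_central G k" G by (rule Suc)
  let ?C = "\<Union>x\<in>lower_central G k. \<Union>y\<in>carrier G. {commutator x y}"
  show ?case unfolding lower_central.simps comm_subgroup_def
  proof (rule normal_generateI)
    show "?C \<subseteq> carrier G" using N.subset by auto
  next
    fix h g assume "h \<in> ?C" and g: "g \<in> carrier G"
    then obtain x y where x: "x \<in> lower_central G k" and y: "y \<in> carrier G"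
      and h: "h = commutator x y" by auto
    have xc: "x \<in> carrier G" using x N.subset by auto
    have "g \<otimes> h \<otimes> inv g = commutator (g \<otimes> x \<otimes> inv g) (g \<otimes> y \<otimes> inv g)"
      using xc y g by (simp add: h m_assoc inv_mult_group)
    moreover have "g \<otimes> x \<otimes> inv g \<in> lower_central G k" using N.inv_op_closed2 g x by blast
    ultimately show "g \<otimes> h \<otimes> inv g \<in> ?C" using g y by blast
  qed
qed

lemma lower_central_subgroup: "subgroup (lower_central G k) G"
  by (rule normal_imp_subgroup[OF lower_central_normal])

lemma commutator_mem_lower_central_Suc:
  "u \<in> lower_central G k \<Longrightarrow> g \<in> carrier G \<Longrightarrow> commutator u g \<in> lower_central G (Suc k)"
  unfolding lower_central.simps comm_subgroup_def by (rule generate.incl) blast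

lemma lower_central_Suc_subset: "lower_central G (Suc k) \<subseteq> lower_central G k"
proof -
  interpret N: normal "lower_central G k" G by (rule lower_central_normal)
  show ?thesis unfolding lower_central.simps comm_subgroup_def
  proof (rule generate_subgroup_incl[OF _ N.subgroup_axioms], clarify)
    fix x y assume x: "x \<in> lower_central G k" and y: "y \<in> carrier G"
    have "commutator x y = x \<otimes> (y \<otimes> inv x \<otimes> inv y)" using x y N.subset by (auto simp: m_assoc)
    moreover have "y \<otimes> inv x \<otimes> inv y \<in> lower_central G k"
      using N.inv_op_closed2 y x N.m_inv_closed by blast
    ultimately show "commutator x y \<in> lower_central G k" using x N.m_closed by simp
  qed
qed

lemma conj_mod_lower_central:
  assumes d: "d \<in> lower_central G k" and x: "x \<in> carrier G"
  shows "\<exists>m\<in>lower_central G (Suc k). x \<otimes> d \<otimes> inv x = d \<otimes> m"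
proof
  interpret N: normal "lower_central G k" G by (rule lower_central_normal)
  have dc: "d \<in> carrier G" using d N.subset by auto
  show "commutator (inv d) x \<in> lower_central G (Suc k)"
    by (rule commutator_mem_lower_central_Suc[OF N.m_inv_closed[OF d] x])
  show "x \<otimes> d \<otimes> inv x = d \<otimes> commutator (inv d) x"
    using dc x by (simp add: m_assoc)
qed

lemma commutator_pow_mod_lower_central:
  assumes x: "x \<in> carrier G" and y: "y \<in> carrier G"
    and c: "commutator x y \<in> lower_central G k"
  shows "\<exists>m\<in>lower_central G (Suc k). commutator (x [^] (j::nat)) y = commutator x y [^] j \<otimes> m"
proof (induction j)
  case 0
  show ?case using y subgroup.one_closed[OF lower_central_subgroup] by (intro bexI[of _ \<one>]) auto
next
  case (Suc j)
  interpret N: normal "lower_central G (Suc k)" G by (rule lower_central_normal)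
  interpret K: subgroup "lower_central G k" G by (rule lower_central_subgroup)
  let ?c = "commutator x y"
  from Suc obtain m where m: "m \<in> lower_central G (Suc k)"
    and cj: "commutator (x [^] j) y = ?c [^] j \<otimes> m" by blast
  have mc: "m \<in> carrier G" using m N.subset by auto
  have "?c [^] j \<otimes> m \<in> lower_central G k"
    using c m lower_central_Suc_subset by (blast intro: K.m_closed subgroup_nat_pow_closed[OF K.subgroup_axioms])
  then obtain m' where m': "m' \<in> lower_central G (Suc k)"
    and conj: "x \<otimes> (?c [^] j \<otimes> m) \<otimes> inv x = ?c [^] j \<otimes> m \<otimes> m'"
    using conj_mod_lower_central x by blast
  have m'c: "m' \<in> carrier G" using m' N.subset by auto
  have "commutator (x [^] Suc j) y = x \<otimes> commutator (x [^] j) y \<otimes> inv x \<otimes> ?c"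
    unfolding nat_pow_Suc2[OF x] using x y by (simp add: m_assoc inv_mult_group)
  also have "\<dots> = ?c [^] j \<otimes> m \<otimes> m' \<otimes> ?c" unfolding cj conj ..
  also have "\<dots> = ?c [^] Suc j \<otimes> (inv ?c \<otimes> (m \<otimes> m') \<otimes> ?c)"
    using x y mc m'c by (simp add: m_assoc)
  finally show ?case
    using N.inv_op_closed1 N.m_closed[OF m m'] x y by auto
qed

lemma commutator_pow_mem_lower_central_Suc:
  assumes x: "x \<in> carrier G" and y: "y \<in> carrier G" and xm: "x [^] (m::nat) = \<one>"
    and c: "commutator x y \<in> lower_central G k"
  shows "commutator x y [^] m \<in> lower_central G (Suc k)"
proof -
  interpret N: subgroup "lower_central G (Suc k)" G by (rule lower_central_subgroup)
  obtain n where n: "n \<in> lower_central G (Suc k)"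
    and e: "commutator (x [^] m) y = commutator x y [^] m \<otimes> n"
    using commutator_pow_mod_lower_central[OF x y c] by blast
  have "commutator x y [^] m \<otimes> n = \<one>" using e xm y by simp
  then have "commutator x y [^] m = inv n" using n N.subset x y by (simp add: inv_equality)
  then show ?thesis using n by simp
qed

lemma commute_if_coprime_pows:
  assumes nil: "lower_central G n0 = {\<one>}" and x: "x \<in> carrier G" and y: "y \<in> carrier G"
    and xm: "x [^] (m::nat) = \<one>" and yn: "y [^] (n::nat) = \<one>" and cop: "coprime m n"
  shows "x \<otimes> y = y \<otimes> x"
proof -
  have "commutator x y \<in> lower_central G (Suc k)" for k
  proof (induction k)
    case 0 show ?case using commutator_mem_lower_central_Suc[of x 0 y] x y by simp
  next
    case (Suc k)
    interpret N: subgroup "lower_central G (Suc (Suc k))" G by (rule lower_central_subgroup)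
    have "commutator y x \<in> lower_central G (Suc k)"
      using commutator_swap[OF x y] subgroup.m_inv_closed[OF lower_central_subgroup Suc] by simp
    then have "inv (commutator x y [^] n) \<in> lower_central G (Suc (Suc k))"
      using commutator_pow_mem_lower_central_Suc[OF y x yn] commutator_swap[OF x y] x y
      by (simp add: nat_pow_inv)
    then have "commutator x y [^] n \<in> lower_central G (Suc (Suc k))"
      using N.m_inv_closed x y by fastforce
    moreover have "commutator x y [^] m \<in> lower_central G (Suc (Suc k))"
      by (rule commutator_pow_mem_lower_central_Suc[OF x y xm Suc])
    ultimately show ?case
      using x y by (blast intro: mem_subgroup_if_coprime_pows[OF N.subgroup_axioms _ _ _ cop])
  qed
  then have "commutator x y \<in> lower_central G n0" using lower_central_Suc_subset by blast
  then show ?thesis using nil commute_if_commutator_eq_one[OF x y] by blast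
qed

end

section \<open>Words of an active sum\<close>

lemma actsum_rel_context: "actsum_rel G \<F> a b \<Longrightarrow> actsum_rel G \<F> (u @ a @ v) (u @ b @ v)"
proof (induction rule: actsum_rel.induct)
  case (refl w) then show ?case by (rule actsum_rel.refl)
next
  case (sym w w') then show ?case by (blast intro: actsum_rel.sym)
next
  case (trans w w' w'') then show ?case by (blast intro: actsum_rel.trans)
next
  case (mult F a b u' v')
  then show ?case using actsum_rel.mult[of F \<F> a b G "u @ u'" "v' @ v"] by simp
next
  case (unit F u' v')
  then show ?case using actsum_rel.unit[of F \<F> G "u @ u'" "v' @ v"] by simp
next
  case (conj F1 F2 h g u' v')
  then show ?case using actsum_rel.conj[of F1 \<F> F2 h g G "u @ u'" "v' @ v"] by simp
qed

lemma actsum_rel_append: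
  assumes "actsum_rel G \<F> a b" and "actsum_rel G \<F> c d"
  shows "actsum_rel G \<F> (a @ c) (b @ d)"
  using actsum_rel_context[OF assms(1), of "[]" c] actsum_rel_context[OF assms(2), of b "[]"]
  by (auto intro: actsum_rel.trans)

lemma actsum_rel_mono:
  assumes "\<F> \<subseteq> \<F>'" and "actsum_rel G \<F> w w'"
  shows "actsum_rel G \<F>' w w'"
  using assms(2)
proof (induction rule: actsum_rel.induct)
  case (refl w) then show ?case by (rule actsum_rel.refl)
next
  case (sym w w') then show ?case by (blast intro: actsum_rel.sym)
next
  case (trans w w' w'') then show ?case by (blast intro: actsum_rel.trans)
next
  case (mult F a b u v) then show ?case using assms(1) by (blast intro: actsum_rel.mult)
next
  case (unit F u v) then show ?case using assms(1) by (blast intro: actsum_rel.unit)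
next
  case (conj F1 F2 h g u v) then show ?case using assms(1) by (blast intro: actsum_rel.conj)
qed

lemma actsum_eval_Nil [simp]: "actsum_eval G [] = \<one>\<^bsub>G\<^esub>"
  by (simp add: actsum_eval_def)

lemma actsum_eval_Cons [simp]: "actsum_eval G (l # w) = snd l \<otimes>\<^bsub>G\<^esub> actsum_eval G w"
  by (cases l) (simp add: actsum_eval_def)

context group begin

lemma actsum_eval_closed: "set (map snd w) \<subseteq> carrier G \<Longrightarrow> actsum_eval G w \<in> carrier G"
  by (induction w) auto

lemma actsum_eval_append:
  "set (map snd u) \<subseteq> carrier G \<Longrightarrow> set (map snd v) \<subseteq> carrier G \<Longrightarrow>
    actsum_eval G (u @ v) = actsum_eval G u \<otimes> actsum_eval G v"
  by (induction u) (auto simp: m_assoc actsum_eval_closed)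

text \<open>The invariant also tracks membership in the carrier, because symmetry lets the
  relations run backwards.\<close>

lemma actsum_rel_eval:
  assumes \<F>: "\<forall>F\<in>\<F>. F \<subseteq> carrier G" and r: "actsum_rel G \<F> w w'"
  shows "(set (map snd w) \<subseteq> carrier G \<longleftrightarrow> set (map snd w') \<subseteq> carrier G) \<and>
         (set (map snd w) \<subseteq> carrier G \<longrightarrow> actsum_eval G w = actsum_eval G w')"
  using r
proof (induction rule: actsum_rel.induct)
  case (mult F a b u v)
  then have "a \<in> carrier G" "b \<in> carrier G" using \<F> by auto
  then show ?case by (auto simp: actsum_eval_append actsum_eval_closed m_assoc)
next
  case (unit F u v)
  then show ?case by (auto simp: actsum_eval_append actsum_eval_closed)
next
  case (conj F1 F2 h g u v)
  then have "h \<in> carrier G" "g \<in> carrier G" using \<F> by auto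
  then show ?case by (auto simp: actsum_eval_append actsum_eval_closed m_assoc)
qed simp_all

lemma conj_set_subgroup:
  "subgroup S G \<Longrightarrow> h \<in> S \<Longrightarrow> conj_set (G\<lparr>carrier := S\<rparr>) h F = conj_set G h F"
  unfolding conj_set_def by simp

lemma conj_set_eq_if_commute:
  assumes h: "h \<in> carrier G" and F: "F \<subseteq> carrier G" and comm: "\<And>x. x \<in> F \<Longrightarrow> x \<otimes> h = h \<otimes> x"
  shows "conj_set G h F = F"
proof -
  have "inv h \<otimes> x \<otimes> h = x" if x: "x \<in> F" for x
    using comm[OF x] x F h by (auto simp: m_assoc)
  then show ?thesis unfolding conj_set_def by simp
qed

lemma conj_set_mult:
  assumes "h1 \<in> carrier G" "h2 \<in> carrier G" "F \<subseteq> carrier G"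
  shows "conj_set G (h1 \<otimes> h2) F = conj_set G h2 (conj_set G h1 F)"
proof -
  have "inv (h1 \<otimes> h2) \<otimes> x \<otimes> (h1 \<otimes> h2) = inv h2 \<otimes> (inv h1 \<otimes> x \<otimes> h1) \<otimes> h2" if "x \<in> F" for x
    using assms that by (auto simp: inv_mult_group m_assoc)
  then show ?thesis unfolding conj_set_def image_image by simp
qed

lemma actsum_rel_subgroup:
  assumes S: "subgroup S G" and \<F>: "\<forall>F\<in>\<F>. F \<subseteq> S" and r: "actsum_rel (G\<lparr>carrier := S\<rparr>) \<F> w w'"
  shows "actsum_rel G \<F> w w'"
  using r
proof (induction rule: actsum_rel.induct)
  case (refl w) then show ?case by (rule actsum_rel.refl)
next
  case (sym w w') then show ?case by (blast intro: actsum_rel.sym)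
next
  case (trans w w' w'') then show ?case by (blast intro: actsum_rel.trans)
next
  case (mult F a b u v) then show ?case using actsum_rel.mult[of F \<F> a b G u v] by simp
next
  case (unit F u v) then show ?case using actsum_rel.unit[of F \<F> G u v] by simp
next
  case (conj F1 F2 h g u v)
  then have "h \<in> S" using \<F> by auto
  then show ?case using actsum_rel.conj[of F1 \<F> F2 h g G u v] conj conj_set_subgroup[OF S]
    by (simp add: m_inv_consistent[OF S])
qed

lemma actsum_rel_swap:
  assumes F1: "F1 \<in> \<F>" "subgroup F1 G" and F2: "F2 \<in> \<F>" "F2 \<subseteq> carrier G"
    and h: "h \<in> F1" and g: "g \<in> F2" and comm: "\<And>x. x \<in> F2 \<Longrightarrow> x \<otimes> h = h \<otimes> x"
  shows "actsum_rel G \<F> [(F2, g), (F1, h)] [(F1, h), (F2, g)]"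
proof -
  have hc: "h \<in> carrier G" by (rule subgroup.mem_carrier[OF F1(2) h])
  have ih: "inv h \<in> F1" by (rule subgroup.m_inv_closed[OF F1(2) h])
  have "conj_set G h F2 = F2" by (rule conj_set_eq_if_commute[OF hc F2(2) comm])
  moreover have "inv h \<otimes> g \<otimes> h = g" using comm[OF g] g F2 hc by (auto simp: m_assoc)
  ultimately have "actsum_rel G \<F> [(F1, h), (F1, inv h), (F2, g), (F1, h)] [(F1, h), (F2, g)]"
    using actsum_rel.conj[OF F1(1) F2(1) h g, of G "[(F1, h)]" "[]"] by simp
  moreover have "actsum_rel G \<F> [(F1, h), (F1, inv h), (F2, g), (F1, h)] [(F1, \<one>), (F2, g), (F1, h)]"
    using actsum_rel.mult[OF F1(1) h ih, of G "[]" "[(F2, g), (F1, h)]"] hc by simp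
  moreover have "actsum_rel G \<F> [(F1, \<one>), (F2, g), (F1, h)] [(F2, g), (F1, h)]"
    using actsum_rel.unit[OF F1(1), of G "[]" "[(F2, g), (F1, h)]"] by simp
  ultimately show ?thesis by (meson actsum_rel.sym actsum_rel.trans)
qed

lemma active_sum_subgroup_member:
  assumes K: "subgroup K G" and act: "is_active_sum (G\<lparr>carrier := K\<rparr>) \<F>" and F: "F \<in> \<F>"
  shows "subgroup F G" and "F \<subseteq> K"
proof -
  have "subgroup F (G\<lparr>carrier := K\<rparr>)"
    using act F unfolding is_active_sum_def conj_closed_gen_family_def by blast
  then show "subgroup F G" and "F \<subseteq> K" using incl_subgroup[OF K] subgroup.subset by force+
qed

lemma active_sum_subgroup_conj_closed:
  assumes K: "subgroup K G" and act: "is_active_sum (G\<lparr>carrier := K\<rparr>) \<F>"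
    and F: "F \<in> \<F>" and h: "h \<in> K"
  shows "conj_set G h F \<in> \<F>"
proof -
  have "conj_set (G\<lparr>carrier := K\<rparr>) h F \<in> \<F>"
    using act F h unfolding is_active_sum_def conj_closed_gen_family_def by simp
  then show ?thesis using conj_set_subgroup[OF K h] by simp
qed

lemma active_sum_subgroup_generate:
  assumes K: "subgroup K G" and act: "is_active_sum (G\<lparr>carrier := K\<rparr>) \<F>"
  shows "generate G (\<Union>\<F>) = K"
proof -
  have "\<Union>\<F> \<subseteq> K" using active_sum_subgroup_member[OF K act] by blast
  then show ?thesis
    using act generate_consistent[OF _ K]
    unfolding is_active_sum_def conj_closed_gen_family_def by simp
qed

lemma active_sum_subgroup_rel:
  assumes K: "subgroup K G" and act: "is_active_sum (G\<lparr>carrier := K\<rparr>) \<F>"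
    and w: "actsum_word \<F> w" and w': "actsum_word \<F> w'"
    and eq: "actsum_eval G w = actsum_eval G w'"
  shows "actsum_rel G \<F> w w'"
proof (rule actsum_rel_subgroup[OF K])
  show "\<forall>F\<in>\<F>. F \<subseteq> K" using active_sum_subgroup_member[OF K act] by blast
  have "actsum_eval (G\<lparr>carrier := K\<rparr>) w = actsum_eval (G\<lparr>carrier := K\<rparr>) w'"
    using eq unfolding actsum_eval_def by simp
  then show "actsum_rel (G\<lparr>carrier := K\<rparr>) \<F> w w'"
    using act w w' unfolding is_active_sum_def by blast
qed

end

section \<open>Active sums over commuting subgroups of coprime exponents\<close>

locale coprime_commuting_active_sums = group G for G (structure) +
  fixes I :: "'i set" and K :: "'i \<Rightarrow> 'a set" and Fam :: "'i \<Rightarrow> 'a set set" and n :: "'i \<Rightarrow> nat"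
  assumes finite_I: "finite I"
    and K_subgroup: "i \<in> I \<Longrightarrow> subgroup (K i) G"
    and K_exponent: "i \<in> I \<Longrightarrow> x \<in> K i \<Longrightarrow> x [^] n i = \<one>"
    and coprime_exponents: "i \<in> I \<Longrightarrow> j \<in> I \<Longrightarrow> i \<noteq> j \<Longrightarrow> coprime (n i) (n j)"
    and K_commute: "i \<in> I \<Longrightarrow> j \<in> I \<Longrightarrow> i \<noteq> j \<Longrightarrow> x \<in> K i \<Longrightarrow> y \<in> K j \<Longrightarrow> x \<otimes> y = y \<otimes> x"
    and K_active_sum: "i \<in> I \<Longrightarrow> is_active_sum (G\<lparr>carrier := K i\<rparr>) (Fam i)"
    and K_generate: "generate G (\<Union>i\<in>I. K i) = carrier G"
begin

definition union_family :: "'a set set" where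
  "union_family = (\<Union>i\<in>I. Fam i)"

text \<open>A subgroup may belong to several of the families (the trivial one, say); any consistent
  choice of index works.\<close>

definition index_of :: "'a set \<Rightarrow> 'i" where
  "index_of F = (SOME i. i \<in> I \<and> F \<in> Fam i)"

definition word_over :: "'i set \<Rightarrow> ('a set \<times> 'a) list \<Rightarrow> bool" where
  "word_over J w \<longleftrightarrow> (\<forall>l\<in>set w. fst l \<in> union_family \<and> snd l \<in> fst l \<and> index_of (fst l) \<in> J)"

definition part :: "'i \<Rightarrow> ('a set \<times> 'a) list \<Rightarrow> ('a set \<times> 'a) list" where
  "part i w = filter (\<lambda>l. index_of (fst l) = i) w"

definition rest :: "'i \<Rightarrow> ('a set \<times> 'a) list \<Rightarrow> ('a set \<times> 'a) list" where
  "rest i w = filter (\<lambda>l. index_of (fst l) \<noteq> i) w"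

definition exponent_prod :: "'i set \<Rightarrow> nat" where
  "exponent_prod J = (\<Prod>j\<in>J. n j)"

lemma index_of_mem: "F \<in> union_family \<Longrightarrow> index_of F \<in> I \<and> F \<in> Fam (index_of F)"
  unfolding index_of_def union_family_def by (rule someI_ex) blast

lemma member_subgroup: "i \<in> I \<Longrightarrow> F \<in> Fam i \<Longrightarrow> subgroup F G"
  by (rule active_sum_subgroup_member(1)[OF K_subgroup K_active_sum])

lemma member_subset_K: "i \<in> I \<Longrightarrow> F \<in> Fam i \<Longrightarrow> F \<subseteq> K i"
  by (rule active_sum_subgroup_member(2)[OF K_subgroup K_active_sum])

lemma K_closed: "i \<in> I \<Longrightarrow> x \<in> K i \<Longrightarrow> x \<in> carrier G"
  using K_subgroup subgroup.subset by blast

lemma letter_mem_K: "F \<in> union_family \<Longrightarrow> g \<in> F \<Longrightarrow> g \<in> K (index_of F)"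
  using index_of_mem member_subset_K by blast

lemma union_family_carrier: "\<forall>F\<in>union_family. F \<subseteq> carrier G"
  using index_of_mem letter_mem_K K_closed by blast

lemma word_over_carrier: "word_over J w \<Longrightarrow> set (map snd w) \<subseteq> carrier G"
  unfolding word_over_def using union_family_carrier by auto

lemma word_over_part: "word_over J w \<Longrightarrow> word_over {i} (part i w)"
  unfolding word_over_def part_def by auto

lemma word_over_rest: "word_over (insert i J) w \<Longrightarrow> word_over J (rest i w)"
  unfolding word_over_def rest_def by auto

lemma actsum_word_if_word_over_singleton: "word_over {i} w \<Longrightarrow> actsum_word (Fam i) w"
  unfolding word_over_def actsum_word_def using index_of_mem by fastforce

lemma word_over_if_actsum_word: "actsum_word union_family w \<Longrightarrow> word_over I w"
  unfolding word_over_def actsum_word_def using index_of_mem by fastforce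

lemma actsum_rel_move:
  assumes l: "fst l \<in> union_family" "snd l \<in> fst l" and "index_of (fst l) \<notin> J"
  shows "word_over J v \<Longrightarrow> actsum_rel G union_family (l # v) (v @ [l])"
proof (induction v)
  case Nil then show ?case by (simp add: actsum_rel.refl)
next
  case (Cons x v)
  have x: "fst x \<in> union_family" "snd x \<in> fst x" "index_of (fst x) \<in> J" and v: "word_over J v"
    using Cons.prems unfolding word_over_def by auto
  have il: "index_of (fst l) \<in> I" and ix: "index_of (fst x) \<in> I" "fst x \<in> Fam (index_of (fst x))"
    using index_of_mem l(1) x(1) by blast+
  have "x' \<otimes> snd x = snd x \<otimes> x'" if "x' \<in> fst l" for x'
    by (rule K_commute[OF il ix(1) _ letter_mem_K[OF l(1) that] letter_mem_K[OF x(1,2)]])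
      (use x(3) \<open>index_of (fst l) \<notin> J\<close> in auto)
  then have "actsum_rel G union_family [(fst l, snd l), (fst x, snd x)] [(fst x, snd x), (fst l, snd l)]"
    using union_family_carrier l(1)
    by (intro actsum_rel_swap[OF x(1) member_subgroup[OF ix] l(1) _ x(2) l(2)]) blast+
  then have "actsum_rel G union_family ([] @ [l, x] @ v) ([] @ [x, l] @ v)"
    by (intro actsum_rel_context) simp
  moreover have "actsum_rel G union_family ([x] @ (l # v) @ []) ([x] @ (v @ [l]) @ [])"
    using Cons.IH[OF v] by (intro actsum_rel_context) simp
  ultimately show ?case by (auto intro: actsum_rel.trans)
qed

lemma actsum_rel_part_rest:
  "word_over J w \<Longrightarrow> actsum_rel G union_family w (part i w @ rest i w)"
proof (induction w)
  case Nil then show ?case by (simp add: actsum_rel.refl part_def rest_def)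
next
  case (Cons l w)
  have l: "fst l \<in> union_family" "snd l \<in> fst l" and w: "word_over J w"
    using Cons.prems unfolding word_over_def by simp_all
  have "actsum_rel G union_family ([l] @ w @ []) ([l] @ (part i w @ rest i w) @ [])"
    using Cons.IH[OF w] by (rule actsum_rel_context)
  then have IH: "actsum_rel G union_family (l # w) (l # part i w @ rest i w)" by simp
  show ?case
  proof (cases "index_of (fst l) = i")
    case True
    then show ?thesis using IH by (simp add: part_def rest_def)
  next
    case False
    have "actsum_rel G union_family (l # part i w) (part i w @ [l])"
      using False by (intro actsum_rel_move[OF l _ word_over_part[OF w]]) simp
    then have "actsum_rel G union_family ([] @ (l # part i w) @ rest i w) ([] @ (part i w @ [l]) @ rest i w)"
      by (rule actsum_rel_context)
    then show ?thesis using False actsum_rel.trans[OF IH] by (simp add: part_def rest_def)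
  qed
qed

lemma eval_part_rest:
  assumes w: "word_over J w"
  shows "actsum_eval G w = actsum_eval G (part i w) \<otimes> actsum_eval G (rest i w)"
proof -
  have wc: "set (map snd w) \<subseteq> carrier G" by (rule word_over_carrier[OF w])
  have "actsum_eval G w = actsum_eval G (part i w @ rest i w)"
    using actsum_rel_eval[OF union_family_carrier actsum_rel_part_rest[OF w]] wc by blast
  also have "\<dots> = actsum_eval G (part i w) \<otimes> actsum_eval G (rest i w)"
    by (rule actsum_eval_append) (use wc in \<open>auto simp: part_def rest_def\<close>)
  finally show ?thesis .
qed

lemma eval_mem_K: "i \<in> I \<Longrightarrow> word_over {i} w \<Longrightarrow> actsum_eval G w \<in> K i"
  by (induction w) (auto simp: word_over_def subgroup.one_closed subgroup.m_closed K_subgroup letter_mem_K)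

lemma eval_commute:
  assumes i: "i \<in> I" "i \<notin> J" and x: "x \<in> K i"
  shows "word_over J w \<Longrightarrow> actsum_eval G w \<otimes> x = x \<otimes> actsum_eval G w"
proof (induction w)
  case Nil then show ?case using K_closed[OF i(1) x] by simp
next
  case (Cons l w)
  have l: "fst l \<in> union_family" "snd l \<in> fst l" "index_of (fst l) \<in> J" and w: "word_over J w"
    using Cons.prems unfolding word_over_def by simp_all
  have lx: "snd l \<otimes> x = x \<otimes> snd l"
    using K_commute[OF conjunct1[OF index_of_mem[OF l(1)]] i(1) _ letter_mem_K[OF l(1,2)] x] l(3) i(2)
    by blast
  have c: "snd l \<in> carrier G" "actsum_eval G w \<in> carrier G" "x \<in> carrier G"
    using letter_mem_K[OF l(1,2)] index_of_mem[OF l(1)] K_closed actsum_eval_closed word_over_carrier[OF w] i x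
    by auto
  have "actsum_eval G (l # w) \<otimes> x = snd l \<otimes> (actsum_eval G w \<otimes> x)" using c by (simp add: m_assoc)
  also have "\<dots> = (snd l \<otimes> x) \<otimes> actsum_eval G w" using Cons.IH[OF w] c by (simp add: m_assoc)
  also have "\<dots> = x \<otimes> actsum_eval G (l # w)" using lx c by (simp add: m_assoc)
  finally show ?case .
qed

lemma coprime_exponent_prod: "i \<in> I \<Longrightarrow> i \<notin> J \<Longrightarrow> J \<subseteq> I \<Longrightarrow> coprime (n i) (exponent_prod J)"
  unfolding exponent_prod_def by (rule prod_coprime_right) (auto intro: coprime_exponents)

lemma eval_pow_exponent_prod:
  assumes "finite J" and "J \<subseteq> I"
  shows "word_over J w \<Longrightarrow> actsum_eval G w [^] exponent_prod J = \<one>"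
  using assms
proof (induction J arbitrary: w rule: finite_induct)
  case empty
  then show ?case by (cases w) (auto simp: word_over_def exponent_prod_def)
next
  case (insert i J)
  define a b where "a = actsum_eval G (part i w)" and "b = actsum_eval G (rest i w)"
  have i: "i \<in> I" using insert by simp
  have a: "a \<in> K i" "a \<in> carrier G"
    unfolding a_def using eval_mem_K[OF i word_over_part[OF insert.prems(1)]] K_closed[OF i] by auto
  have b: "b \<in> carrier G" "b [^] exponent_prod J = \<one>"
    unfolding b_def using word_over_rest[OF insert.prems(1)] insert
    by (auto intro: actsum_eval_closed[OF word_over_carrier])
  have ab: "a \<otimes> b = b \<otimes> a"
    unfolding b_def using eval_commute[OF i insert.hyps(2) a(1) word_over_rest[OF insert.prems(1)]] by simp
  have "exponent_prod (insert i J) = n i * exponent_prod J"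
    using insert.hyps by (simp add: exponent_prod_def)
  then have "actsum_eval G w [^] exponent_prod (insert i J) = (a \<otimes> b) [^] (n i * exponent_prod J)"
    using eval_part_rest[OF insert.prems(1), of i] by (simp add: a_def b_def)
  also have "\<dots> = a [^] (n i * exponent_prod J) \<otimes> b [^] (n i * exponent_prod J)"
    by (rule pow_mult_distrib[OF ab a(2) b(1)])
  also have "a [^] (n i * exponent_prod J) = \<one>"
    using K_exponent[OF i a(1)] a by (simp add: nat_pow_pow[symmetric])
  also have "b [^] (n i * exponent_prod J) = (b [^] exponent_prod J) [^] n i"
    using b(1) by (simp add: nat_pow_pow mult.commute[of "exponent_prod J" "n i"])
  finally show ?case using b(2) by simp
qed

lemma K_mem_eq_one_if_eval_eq:
  assumes "finite J" "J \<subseteq> I" "i \<in> I" "i \<notin> J" and z: "z \<in> K i"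
    and b: "word_over J b" and b': "word_over J b'"
    and eq: "z \<otimes> actsum_eval G b = actsum_eval G b'"
  shows "z = \<one>"
proof -
  let ?b = "actsum_eval G b" and ?M = "exponent_prod J"
  have c: "z \<in> carrier G" "?b \<in> carrier G"
    using K_closed z assms actsum_eval_closed word_over_carrier[OF b] by auto
  have "?b \<otimes> z = z \<otimes> ?b" by (rule eval_commute[OF assms(3,4) z b])
  then have "(z \<otimes> ?b) [^] ?M = z [^] ?M \<otimes> ?b [^] ?M" using c by (simp add: pow_mult_distrib)
  then have "z [^] ?M = \<one>"
    using eq eval_pow_exponent_prod[OF assms(1,2) b] eval_pow_exponent_prod[OF assms(1,2) b'] c by simp
  moreover have "z [^] n i = \<one>" using K_exponent assms z by blast
  ultimately show ?thesis
    using mem_subgroup_if_coprime_pows[OF triv_subgroup c(1), of "n i" ?M]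
      coprime_exponent_prod assms by auto
qed

lemma eval_parts_eq_if_eval_eq:
  assumes J: "finite J" "J \<subseteq> I" and i: "i \<in> I" "i \<notin> J"
    and w: "word_over (insert i J) w" and w': "word_over (insert i J) w'"
    and eq: "actsum_eval G w = actsum_eval G w'"
  shows "actsum_eval G (part i w) = actsum_eval G (part i w')"
    and "actsum_eval G (rest i w) = actsum_eval G (rest i w')"
proof -
  define a a' b b' where "a = actsum_eval G (part i w)" and "a' = actsum_eval G (part i w')"
    and "b = actsum_eval G (rest i w)" and "b' = actsum_eval G (rest i w')"
  have rests: "word_over J (rest i w)" "word_over J (rest i w')"
    using w w' word_over_rest by blast+
  have a: "a \<in> K i" "a' \<in> K i"
    unfolding a_def a'_def using eval_mem_K[OF i(1)] w w' word_over_part by blast+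
  have c: "a \<in> carrier G" "a' \<in> carrier G" "b \<in> carrier G" "b' \<in> carrier G"
    using K_closed[OF i(1)] a rests word_over_carrier actsum_eval_closed by (auto simp: b_def b'_def)
  have "a \<otimes> b = a' \<otimes> b'"
    using eq eval_part_rest[OF w] eval_part_rest[OF w'] by (simp add: a_def a'_def b_def b'_def)
  then have z: "(inv a' \<otimes> a) \<otimes> b = b'" using c by (simp add: m_assoc)
  moreover have "inv a' \<otimes> a \<in> K i"
    using a K_subgroup[OF i(1)] subgroup.m_closed subgroup.m_inv_closed by metis
  ultimately have "inv a' \<otimes> a = \<one>"
    using K_mem_eq_one_if_eval_eq[OF J i _ rests] b_def b'_def by blast
  moreover have "a = a' \<otimes> (inv a' \<otimes> a)" using c by simp
  ultimately show "a = a'" and "b = b'" using c z by simp_all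
qed

lemma actsum_rel_if_eval_eq:
  assumes "finite J" and "J \<subseteq> I"
  shows "word_over J w \<Longrightarrow> word_over J w' \<Longrightarrow> actsum_eval G w = actsum_eval G w' \<Longrightarrow>
    actsum_rel G union_family w w'"
  using assms
proof (induction J arbitrary: w w' rule: finite_induct)
  case empty
  then show ?case by (cases w; cases w') (auto simp: word_over_def intro: actsum_rel.refl)
next
  case (insert i J)
  have i: "i \<in> I" and J: "J \<subseteq> I" using insert by auto
  note parts_eq = eval_parts_eq_if_eval_eq[OF insert.hyps(1) J i insert.hyps(2) insert.prems(1-3)]
  have "actsum_rel G (Fam i) (part i w) (part i w')"
    using active_sum_subgroup_rel[OF K_subgroup[OF i] K_active_sum[OF i]] parts_eq(1)
      actsum_word_if_word_over_singleton word_over_part insert.prems(1,2) by blast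
  then have "actsum_rel G union_family (part i w) (part i w')"
    using i by (auto intro: actsum_rel_mono simp: union_family_def)
  moreover have "actsum_rel G union_family (rest i w) (rest i w')"
    using insert.IH[OF _ _ _ J] parts_eq(2) word_over_rest insert.prems(1,2) by blast
  ultimately have "actsum_rel G union_family (part i w @ rest i w) (part i w' @ rest i w')"
    by (rule actsum_rel_append)
  then show ?case
    using actsum_rel_part_rest insert.prems(1,2) by (meson actsum_rel.sym actsum_rel.trans)
qed

definition family_normalizer :: "'a set" where
  "family_normalizer = {h \<in> carrier G. \<forall>i\<in>I. \<forall>F\<in>Fam i. conj_set G h F \<in> Fam i}"

lemma K_subset_family_normalizer: "j \<in> I \<Longrightarrow> K j \<subseteq> family_normalizer"
proof
  fix h assume j: "j \<in> I" and h: "h \<in> K j"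
  have "conj_set G h F \<in> Fam i" if i: "i \<in> I" and F: "F \<in> Fam i" for i F
  proof (cases "i = j")
    case True
    then show ?thesis using active_sum_subgroup_conj_closed[OF K_subgroup K_active_sum] i F h by blast
  next
    case False
    have "conj_set G h F = F"
      using member_subset_K[OF i F] K_closed[OF i] K_closed[OF j h] K_commute[OF i j False _ h]
      by (intro conj_set_eq_if_commute) blast+
    then show ?thesis using F by simp
  qed
  then show "h \<in> family_normalizer" unfolding family_normalizer_def using K_closed[OF j h] by blast
qed

lemma carrier_subset_family_normalizer: "carrier G \<subseteq> family_normalizer"
proof
  fix h assume "h \<in> carrier G"
  then have "h \<in> generate G (\<Union>i\<in>I. K i)" using K_generate by simp
  then show "h \<in> family_normalizer"
  proof (induction rule: generate.induct)
    case one
    have "conj_set G \<one> F = F" if "i \<in> I" "F \<in> Fam i" for i F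
      using member_subset_K[OF that] K_closed[OF that(1)] by (intro conj_set_eq_if_commute) auto
    then show ?case unfolding family_normalizer_def by simp
  next
    case (incl h)
    then show ?case using K_subset_family_normalizer by blast
  next
    case (inv h)
    then obtain j where j: "j \<in> I" "h \<in> K j" by blast
    then have "inv h \<in> K j" by (rule subgroup.m_inv_closed[OF K_subgroup])
    then show ?case using K_subset_family_normalizer[OF j(1)] by blast
  next
    case (eng h1 h2)
    then have c: "h1 \<in> carrier G" "h2 \<in> carrier G" unfolding family_normalizer_def by auto
    have "conj_set G (h1 \<otimes> h2) F \<in> Fam i" if i: "i \<in> I" and F: "F \<in> Fam i" for i F
    proof -
      have "conj_set G h1 F \<in> Fam i" using eng.IH(1) i F unfolding family_normalizer_def by blast
      then have "conj_set G h2 (conj_set G h1 F) \<in> Fam i"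
        using eng.IH(2) i unfolding family_normalizer_def by blast
      moreover have "F \<subseteq> carrier G" using member_subset_K[OF i F] K_closed[OF i] by blast
      ultimately show ?thesis using conj_set_mult[OF c] by simp
    qed
    then show ?case unfolding family_normalizer_def using c by simp
  qed
qed

lemma generate_union_family: "generate G (\<Union>union_family) = carrier G"
proof
  show "generate G (\<Union>union_family) \<subseteq> carrier G"
    using generate_incl union_family_carrier by blast
  have "K i \<subseteq> generate G (\<Union>union_family)" if i: "i \<in> I" for i
  proof -
    have "K i = generate G (\<Union>(Fam i))"
      using active_sum_subgroup_generate[OF K_subgroup[OF i] K_active_sum[OF i]] by simp
    also have "\<dots> \<subseteq> generate G (\<Union>union_family)"
      using i by (intro mono_generate) (auto simp: union_family_def)
    finally show ?thesis .
  qed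
  then show "carrier G \<subseteq> generate G (\<Union>union_family)"
    using generate_subgroup_incl[OF _ generate_is_subgroup] union_family_carrier K_generate
    by (metis UN_least Sup_least)
qed

theorem is_active_sum_union_family: "is_active_sum G union_family"
  unfolding is_active_sum_def conj_closed_gen_family_def
proof (intro conjI ballI allI impI)
  show "subgroup F G" if "F \<in> union_family" for F
    using that index_of_mem member_subgroup by blast
  show "conj_set G h F \<in> union_family" if "F \<in> union_family" and "h \<in> carrier G" for F h
    using that index_of_mem carrier_subset_family_normalizer
    unfolding family_normalizer_def union_family_def by blast
  show "generate G (\<Union>union_family) = carrier G" by (rule generate_union_family)
  show "actsum_rel G union_family w w'"
    if "actsum_word union_family w \<and> actsum_word union_family w' \<and> actsum_eval G w = actsum_eval G w'"
    for w w'
    using that actsum_rel_if_eval_eq[OF finite_I subset_refl] word_over_if_actsum_word by blast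
qed

end

section \<open>Sylow subgroups of finite groups\<close>

context group begin

lemma subgroup_pow_card_eq_one:
  assumes K: "subgroup K G" and "finite K" and x: "x \<in> K"
  shows "x [^] card K = \<one>"
proof -
  interpret K: group "G\<lparr>carrier := K\<rparr>" by (rule subgroup.subgroup_is_group[OF K is_group])
  have "x [^] card K = x [^]\<^bsub>G\<lparr>carrier := K\<rparr>\<^esub> order (G\<lparr>carrier := K\<rparr>)"
    by (simp add: order_def nat_pow_consistent)
  also have "\<dots> = \<one>" using K.pow_order_eq_1 x by simp
  finally show ?thesis .
qed

lemma card_subgroup_dvd:
  assumes H: "subgroup H G" and K: "subgroup K G" and "H \<subseteq> K"
  shows "card H dvd card K"
proof -
  interpret K: group "G\<lparr>carrier := K\<rparr>" by (rule subgroup.subgroup_is_group[OF K is_group])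
  have "card (rcosets\<^bsub>G\<lparr>carrier := K\<rparr>\<^esub> H) * card H = card K"
    using K.lagrange[OF subgroup_incl[OF H K \<open>H \<subseteq> K\<close>]] by (simp add: order_def)
  then show ?thesis by (metis dvd_triv_right)
qed

lemma subgroup_eq_carrier_if_prime_powers_dvd:
  assumes fin: "finite (carrier G)" and K: "subgroup K G"
    and dvd: "\<And>p. Factorial_Ring.prime p \<Longrightarrow> p dvd order G \<Longrightarrow> p ^ multiplicity p (order G) dvd card K"
  shows "K = carrier G"
proof -
  have Kc: "K \<subseteq> carrier G" by (rule subgroup.subset[OF K])
  have K0: "card K \<noteq> 0"
    using finite_subset[OF Kc fin] subgroup.one_closed[OF K] by (auto simp: card_eq_0_iff)
  have "order G dvd card K"
  proof (rule multiplicity_le_imp_dvd)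
    show "order G \<noteq> 0" using fin order_gt_0_iff_finite by blast
    fix p :: nat assume p: "Factorial_Ring.prime p"
    show "multiplicity p (order G) \<le> multiplicity p (card K)"
    proof (cases "p dvd order G")
      case True
      then show ?thesis using multiplicity_geI[OF K0 _ dvd[OF p True]] p not_prime_unit by blast
    qed (simp add: not_dvd_imp_multiplicity_0)
  qed
  then have "card (carrier G) \<le> card K" using K0 by (simp add: order_def dvd_imp_le)
  then show ?thesis using card_seteq[OF fin Kc] by simp
qed

lemma generate_prime_power_subgroups:
  assumes fin: "finite (carrier G)"
    and S: "\<And>p. Factorial_Ring.prime p \<Longrightarrow> p dvd order G \<Longrightarrow>
              subgroup (S p) G \<and> card (S p) = p ^ multiplicity p (order G)"
  shows "generate G (\<Union>p\<in>{p. Factorial_Ring.prime p \<and> p dvd order G}. S p) = carrier G"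
    (is "generate G ?U = _")
proof (rule subgroup_eq_carrier_if_prime_powers_dvd[OF fin generate_is_subgroup])
  show "?U \<subseteq> carrier G" using S subgroup.subset by blast
  then show "p ^ multiplicity p (order G) dvd card (generate G ?U)"
    if "Factorial_Ring.prime p" "p dvd order G" for p
    using that S card_subgroup_dvd[OF _ generate_is_subgroup] generate.incl
    by (metis (no_types, lifting) UN_subset_iff mem_Collect_eq subsetI)
qed

end

theorem lemma4p3:
  fixes H :: "('a, 'b) monoid_scheme"
    and Hp :: "nat \<Rightarrow> 'a set" and A B :: "nat \<Rightarrow> 'a set" and Fam :: "nat \<Rightarrow> 'a set set"
  assumes "group H" and "finite (carrier H)" and "nilpotent_group H"
    and sylow: "\<And>p. Factorial_Ring.prime p \<Longrightarrow> p dvd order H \<Longrightarrow>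
                  subgroup (Hp p) H \<and> card (Hp p) = p ^ multiplicity p (order H)"
    and metacyclic: "\<And>p. Factorial_Ring.prime p \<Longrightarrow> p dvd order H \<Longrightarrow>
          subgroup (A p) H \<and> subgroup (B p) H \<and>
          cyclic_group (subgroup_generated H (A p)) \<and> cyclic_group (subgroup_generated H (B p)) \<and>
          A p \<lhd> H\<lparr>carrier := Hp p\<rparr> \<and> Hp p = B p <#>\<^bsub>H\<^esub> A p"
    and fam: "\<And>p. Factorial_Ring.prime p \<Longrightarrow> p dvd order H \<Longrightarrow>
          Fam p = insert (A p) ((\<lambda>x. conj_set H x (B p)) ` Hp p)"
    and props: "\<And>p. Factorial_Ring.prime p \<Longrightarrow> p dvd order H \<Longrightarrow>
          regular_family (H\<lparr>carrier := Hp p\<rparr>) (Fam p) \<and>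
          independent_family (H\<lparr>carrier := Hp p\<rparr>) (Fam p) \<and>
          is_active_sum (H\<lparr>carrier := Hp p\<rparr>) (Fam p)"
  shows "is_active_sum H (\<Union>p \<in> {p. Factorial_Ring.prime p \<and> p dvd order H}. Fam p)"
proof -
  interpret group H by fact
  let ?P = "{p. Factorial_Ring.prime p \<and> p dvd order H}"
  let ?e = "\<lambda>p. p ^ multiplicity p (order H)"
  obtain n0 where nil: "lower_central H n0 = {\<one>\<^bsub>H\<^esub>}"
    using \<open>nilpotent_group H\<close> unfolding nilpotent_group_def by blast
  have exponent: "x [^]\<^bsub>H\<^esub> ?e p = \<one>\<^bsub>H\<^esub>" if "p \<in> ?P" "x \<in> Hp p" for p x
    using subgroup_pow_card_eq_one sylow that finite_subset[OF subgroup.subset \<open>finite (carrier H)\<close>]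
    by (metis mem_Collect_eq)
  have coprime: "coprime (?e p) (?e q)" if "p \<in> ?P" "q \<in> ?P" "p \<noteq> q" for p q
    using primes_coprime[of p q] that by simp
  have "coprime_commuting_active_sums H ?P Hp Fam ?e"
  proof (intro coprime_commuting_active_sums.intro coprime_commuting_active_sums_axioms.intro)
    show "finite ?P"
      using \<open>finite (carrier H)\<close> order_gt_0_iff_finite finite_prime_divisors by blast
    show "x \<otimes>\<^bsub>H\<^esub> y = y \<otimes>\<^bsub>H\<^esub> x"
      if "p \<in> ?P" "q \<in> ?P" "p \<noteq> q" "x \<in> Hp p" "y \<in> Hp q" for p q x y
      using commute_if_coprime_pows[OF nil _ _ exponent exponent coprime] sylow that subgroup.subset
      by blast
    show "generate H (\<Union>p\<in>?P. Hp p) = carrier H"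
      by (rule generate_prime_power_subgroups[OF \<open>finite (carrier H)\<close> sylow])
  qed (use \<open>group H\<close> sylow props exponent coprime in auto)
  then interpret coprime_commuting_active_sums H ?P Hp Fam ?e .
  show ?thesis using is_active_sum_union_family unfolding union_family_def .
qed

end
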